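(* Let $n\geq 1$, let $\mathcal{X}=\{-1,1\}^n$, and let $\mathcal{P}\subseteq[0,1]$ be a Lebesgue measurable set with Lebesgue measure $\mu(\mathcal{P})>0$. Let $\mathcal{K}$ be the set of admissible controllers, i.e. maps $K:\mathcal{X}\to\mathbb{R}^n$, $X=(X_0,\dots,X_{n-1})\mapsto (K_0(X),\dots,K_{n-1}(X))$, such that for each $k\in\{0,\dots,n-1\}$ the value $K_k(X)$ depends only on $X_0,\dots,X_{k-1}$ (causality; in particular $K_0$ is constant), and $|K_k(X)|\leq 1$ for all $X$ and $k$. For $K\in\mathcal{K}$ and $p\in[0,1]$ let \[ ELG_K(p)\doteq\frac{1}{n}\sum_{X\in\mathcal{X}}P_p(X)\sum_{k=0}^{n-1}\log\bigl(1+K_k(X)X_k\bigr),\qquad P_p(X)\doteq p^{n_h(X)}(1-p)^{n-n_h(X)}, \] where $n_h(X)=\#\{i: X_i=1\}$, with the conventions $\log 0=-\infty$ and $0\cdot(-\infty)=0$. Then the function \[ f(K)\doteq\int_{p\in\mathcal{P}}ELG_K(p)\,dp,\qquad K\in\mathcal{K}, \] has a unique maximizer $K^*\in\mathcal{K}$, given, for each stage $k\in\{0,\dots,n-1\}$ and each sample path $\bar X\in\mathcal{X}$, by \[ K_k^*(\bar X)=\frac{\int_{p\in\mathcal{P}}p^{q_k}(1-p)^{k-q_k}(2p-1)\,dp}{\int_{p\in\mathcal{P}}p^{q_k}(1-p)^{k-q_k}\,dp}, \] where $q_k=q_k(\bar X)=\#\{i\in\{0,\dots,k-1\}:\bar X_i=1\}$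 (so $q_0=0$).
   Context: Interpretation: a bettor flips a coin $n$ times with probability of heads $p$ and even-money payoff; $X_k=1$ means heads and $X_k=-1$ tails at flip $k$. Starting from wealth $V_0>0$, the bet at stage $k$ is $u_k=K_k(X)V_k$ (positive means a bet on heads, negative on tails), and wealth evolves as $V_{k+1}=(1+K_k(X)X_k)V_k$; thus $ELG_K(p)=\frac1n\mathbb{E}\log(V_n/V_0)$. The set $\mathcal{P}$ represents the uncertainty in the probability of heads. *)

theory Defs
  imports "HOL-Analysis.Analysis"
begin

definition paths :: "nat \<Rightarrow> real list set" where
  "paths n = {X. length X = n \<and> set X \<subseteq> {-1, 1}}"

text \<open>Controllers: K X k is the k-th component K_k(X).  Admissible: causal and bounded by 1
  (conditions only on sample paths and stages k < n).\<close>
definition admissible :: "nat \<Rightarrow> (real list \<Rightarrow> nat \<Rightarrow> real) set" where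
  "admissible n = {K.
     (\<forall>X\<in>paths n. \<forall>Y\<in>paths n. \<forall>k<n. take k X = take k Y \<longrightarrow> K X k = K Y k) \<and>
     (\<forall>X\<in>paths n. \<forall>k<n. \<bar>K X k\<bar> \<le> 1)}"

definition nheads :: "real list \<Rightarrow> nat" where
  "nheads X = length (filter (\<lambda>x. x = 1) X)"

definition Pp :: "nat \<Rightarrow> real \<Rightarrow> real list \<Rightarrow> real" where
  "Pp n p X = p ^ nheads X * (1 - p) ^ (n - nheads X)"

text \<open>Extended logarithm with log 0 = -\<infinity> (arguments are always \<ge> 0 here).\<close>
definition elog :: "real \<Rightarrow> ereal" where
  "elog x = (if x \<le> 0 then -\<infinity> else ereal (ln x))"

text \<open>Expected log growth; ereal multiplication satisfies 0 * (-\<infinity>) = 0.\<close>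
definition ELG :: "nat \<Rightarrow> (real list \<Rightarrow> nat \<Rightarrow> real) \<Rightarrow> real \<Rightarrow> ereal" where
  "ELG n K p = ereal (1 / real n) *
     (\<Sum>X\<in>paths n. ereal (Pp n p X) * (\<Sum>k<n. elog (1 + K X k * X ! k)))"

definition ereal_set_integral :: "real set \<Rightarrow> (real \<Rightarrow> ereal) \<Rightarrow> ereal" where
  "ereal_set_integral P g =
     enn2ereal (\<integral>\<^sup>+ p\<in>P. e2ennreal (g p) \<partial>lebesgue)
     - enn2ereal (\<integral>\<^sup>+ p\<in>P. e2ennreal (- g p) \<partial>lebesgue)"

definition fobj :: "nat \<Rightarrow> real set \<Rightarrow> (real list \<Rightarrow> nat \<Rightarrow> real) \<Rightarrow> ereal" where
  "fobj n P K = ereal_set_integral P (ELG n K)"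

definition Kstar :: "real set \<Rightarrow> real list \<Rightarrow> nat \<Rightarrow> real" where
  "Kstar P X k =
     (let q = nheads (take k X) in
       (LINT p:P|lebesgue. p ^ q * (1 - p) ^ (k - q) * (2 * p - 1))
       / (LINT p:P|lebesgue. p ^ q * (1 - p) ^ (k - q)))"

end

theory Submission
  imports Defs
begin

text \<open>Because \<open>K\<^sub>k\<close> sees only the first \<open>k\<close> flips, summing out the later flips splits the
  expected log growth into a sum over stages \<open>k\<close> and prefixes \<open>Y\<close> of length \<open>k\<close> of
  \<open>P\<^sub>p(Y) (p ln(1 + a) + (1 - p) ln(1 - a))\<close>, where \<open>a\<close> is the bet placed after \<open>Y\<close>.
  Integrating over \<open>P\<close> turns each summand into \<open>A ln(1 + a) + B ln(1 - a)\<close> with weights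
  \<open>A, B > 0\<close>, whose unique maximiser \<open>a = (A - B) / (A + B)\<close> is the bet of \<open>K*\<close>, so
  \<open>K*\<close> wins stage by stage and strictly wherever a controller deviates from it. A controller
  that can go bankrupt (\<open>1 + K\<^sub>k(X) X\<^sub>k \<le> 0\<close> on some path) has expected log growth \<open>-\<infinity>\<close>
  for every \<open>p\<close> in \<open>(0, 1)\<close>, hence objective \<open>-\<infinity>\<close>, because \<open>P - {0, 1}\<close> has positive measure.\<close>

section \<open>Sample paths and causal controllers\<close>

lemma finite_paths: "finite (paths n)"
  by (rule finite_subset[OF _ finite_lists_length_eq[of "{-1, 1::real}" n]])
    (auto simp: paths_def)

lemma paths_Suc: "paths (Suc k) = (\<lambda>(Y, x). Y @ [x]) ` (paths k \<times> {-1, 1})"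
proof (rule set_eqI, rule iffI)
  fix Z assume Z: "Z \<in> paths (Suc k)"
  then have "Z \<noteq> []" by (auto simp: paths_def)
  then have "Z = butlast Z @ [last Z]" by simp
  moreover have "butlast Z \<in> paths k"
    using Z by (auto simp: paths_def dest: in_set_butlastD)
  moreover have "last Z \<in> {-1, 1}"
    using Z \<open>Z \<noteq> []\<close> last_in_set[of Z] unfolding paths_def by blast
  ultimately show "Z \<in> (\<lambda>(Y, x). Y @ [x]) ` (paths k \<times> {-1, 1})" by force
qed (auto simp: paths_def)

lemma nth_path_cases:
  assumes "X \<in> paths n" "k < n"
  shows "X ! k = 1 \<or> X ! k = -1"
proof -
  have "X ! k \<in> set X" using assms by (simp add: paths_def)
  then show ?thesis using assms(1) by (auto simp: paths_def)
qed

lemma take_in_paths: "X \<in> paths n \<Longrightarrow> k \<le> n \<Longrightarrow> take k X \<in> paths k"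
  by (auto simp: paths_def dest: in_set_takeD)

lemma Pp_snoc:
  assumes "length Y = k"
  shows "Pp (Suc k) p (Y @ [x]) = Pp k p Y * (if x = 1 then p else 1 - p)"
proof -
  have "nheads Y \<le> k"
    using assms length_filter_le[of "\<lambda>x. x = 1" Y] by (simp add: nheads_def)
  then show ?thesis by (simp add: Pp_def nheads_def Suc_diff_le)
qed

lemma sum_paths_Suc:
  "(\<Sum>Z\<in>paths (Suc k). Pp (Suc k) p Z * F Z) =
   (\<Sum>Y\<in>paths k. Pp k p Y * (p * F (Y @ [1]) + (1 - p) * F (Y @ [-1])))"
proof -
  have inj: "inj_on (\<lambda>(Y, x). Y @ [x]) (paths k \<times> {-1, 1::real})"
    by (auto simp: inj_on_def)
  have "(\<Sum>Z\<in>paths (Suc k). Pp (Suc k) p Z * F Z) =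
      (\<Sum>(Y, x)\<in>paths k \<times> {-1, 1}. Pp (Suc k) p (Y @ [x]) * F (Y @ [x]))"
    unfolding paths_Suc by (subst sum.reindex[OF inj]) (simp add: case_prod_beta)
  also have "\<dots> = (\<Sum>Y\<in>paths k. \<Sum>x\<in>{-1, 1}. Pp (Suc k) p (Y @ [x]) * F (Y @ [x]))"
    by (subst sum.cartesian_product[symmetric]) simp
  also have "\<dots> = (\<Sum>Y\<in>paths k. Pp k p Y * (p * F (Y @ [1]) + (1 - p) * F (Y @ [-1])))"
    by (intro sum.cong refl) (simp add: Pp_snoc paths_def algebra_simps)
  finally show ?thesis .
qed

lemma sum_paths_take:
  assumes "m \<le> n"
  shows "(\<Sum>X\<in>paths n. Pp n p X * F (take m X)) = (\<Sum>Y\<in>paths m. Pp m p Y * F Y)"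
  using assms
proof (induction n rule: dec_induct)
  case base
  then show ?case by (intro sum.cong) (auto simp: paths_def)
next
  case (step n)
  have "(\<Sum>X\<in>paths (Suc n). Pp (Suc n) p X * F (take m X)) =
      (\<Sum>Y\<in>paths n. Pp n p Y * (p * F (take m (Y @ [1])) + (1 - p) * F (take m (Y @ [-1]))))"
    by (rule sum_paths_Suc)
  also have "\<dots> = (\<Sum>Y\<in>paths n. Pp n p Y * F (take m Y))"
    using step.hyps by (intro sum.cong refl) (auto simp: paths_def algebra_simps)
  finally show ?case using step.IH by simp
qed

text \<open>The bet of a causal controller after a prefix \<open>Y\<close> may be read off at any completion of
  \<open>Y\<close> to a full path; \<open>pad_path\<close> fixes one.\<close>
definition pad_path :: "nat \<Rightarrow> real list \<Rightarrow> real list" where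
  "pad_path n Y = Y @ replicate (n - length Y) 1"

lemma pad_path_in_paths: "Y \<in> paths k \<Longrightarrow> k \<le> n \<Longrightarrow> pad_path n Y \<in> paths n"
  by (auto simp: pad_path_def paths_def)

lemma take_pad_path: "k \<le> length Y \<Longrightarrow> take k (pad_path n Y) = take k Y"
  by (simp add: pad_path_def)

lemma nth_pad_path: "k < n \<Longrightarrow> pad_path n Y ! k = (if k < length Y then Y ! k else 1)"
  by (auto simp: pad_path_def nth_append)

lemma admissible_causal:
  assumes K: "K \<in> admissible n" and X: "X \<in> paths n" and k: "k < n"
  shows "K X k = K (pad_path n (take k X)) k"
proof -
  have causal: "K X' k = K X'' k"
    if "X' \<in> paths n" "X'' \<in> paths n" "take k X' = take k X''" for X' X''
    using K that k unfolding admissible_def by blast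
  have "take k X \<in> paths k" using X k by (simp add: take_in_paths)
  then have "pad_path n (take k X) \<in> paths n" using k by (simp add: pad_path_in_paths)
  moreover have "take k X = take k (pad_path n (take k X))"
    using X k by (simp add: pad_path_def paths_def)
  ultimately show ?thesis by (rule causal[OF X])
qed

definition solvent :: "nat \<Rightarrow> (real list \<Rightarrow> nat \<Rightarrow> real) \<Rightarrow> bool" where
  "solvent n K \<longleftrightarrow> (\<forall>X\<in>paths n. \<forall>k<n. 0 < 1 + K X k * X ! k)"

lemma solvent_bet_abs_less:
  assumes K: "K \<in> admissible n" "solvent n K" and k: "k < n" and Y: "Y \<in> paths k"
  shows "\<bar>K (pad_path n Y) k\<bar> < 1"
proof -
  have lY: "length Y = k" using Y by (simp add: paths_def)
  define Xh where "Xh = pad_path n Y"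
  define Xt where "Xt = pad_path n (Y @ [-1])"
  have "Y @ [-1] \<in> paths (Suc k)" using Y by (simp add: paths_def)
  then have paths: "Xh \<in> paths n" "Xt \<in> paths n"
    using Y k by (simp_all add: Xh_def Xt_def pad_path_in_paths)
  have "Xh ! k = 1" "Xt ! k = -1" "take k Xt = Y"
    using lY k by (simp_all add: Xh_def Xt_def nth_pad_path take_pad_path nth_append)
  moreover have "K Xt k = K Xh k"
    using admissible_causal[OF K(1) paths(2) k] \<open>take k Xt = Y\<close> by (simp add: Xh_def)
  moreover have "0 < 1 + K Xh k * Xh ! k" "0 < 1 + K Xt k * Xt ! k"
    using K(2) paths k unfolding solvent_def by blast+
  ultimately show ?thesis by (simp add: Xh_def abs_less_iff)
qed

lemma sum_paths_stage_log:
  assumes K: "K \<in> admissible n" and k: "k < n"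
  shows "(\<Sum>X\<in>paths n. Pp n p X * ln (1 + K X k * X ! k)) =
    (\<Sum>Y\<in>paths k. Pp k p Y *
      (p * ln (1 + K (pad_path n Y) k) + (1 - p) * ln (1 - K (pad_path n Y) k)))"
proof -
  define G where "G Z = ln (1 + K (pad_path n (take k Z)) k * Z ! k)" for Z
  have "(\<Sum>X\<in>paths n. Pp n p X * ln (1 + K X k * X ! k)) =
      (\<Sum>X\<in>paths n. Pp n p X * G (take (Suc k) X))"
    using admissible_causal[OF K _ k] k by (intro sum.cong refl) (simp add: G_def)
  also have "\<dots> = (\<Sum>Z\<in>paths (Suc k). Pp (Suc k) p Z * G Z)"
    using k by (intro sum_paths_take) simp
  also have "\<dots> = (\<Sum>Y\<in>paths k. Pp k p Y * (p * G (Y @ [1]) + (1 - p) * G (Y @ [-1])))"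
    by (rule sum_paths_Suc)
  also have "\<dots> = (\<Sum>Y\<in>paths k. Pp k p Y *
      (p * ln (1 + K (pad_path n Y) k) + (1 - p) * ln (1 - K (pad_path n Y) k)))"
    by (intro sum.cong refl) (auto simp: G_def paths_def nth_append)
  finally show ?thesis .
qed

definition log_growth :: "nat \<Rightarrow> (real list \<Rightarrow> nat \<Rightarrow> real) \<Rightarrow> real \<Rightarrow> real" where
  "log_growth n K p = (1 / real n) * (\<Sum>X\<in>paths n. Pp n p X * (\<Sum>k<n. ln (1 + K X k * X ! k)))"

lemma log_growth_stagewise:
  assumes "K \<in> admissible n"
  shows "log_growth n K p = (1 / real n) * (\<Sum>k<n. \<Sum>Y\<in>paths k. Pp k p Y *
      (p * ln (1 + K (pad_path n Y) k) + (1 - p) * ln (1 - K (pad_path n Y) k)))"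
proof -
  have "(\<Sum>X\<in>paths n. Pp n p X * (\<Sum>k<n. ln (1 + K X k * X ! k))) =
      (\<Sum>k<n. \<Sum>X\<in>paths n. Pp n p X * ln (1 + K X k * X ! k))"
    by (subst sum.swap) (simp add: sum_distrib_left)
  then show ?thesis
    using sum_paths_stage_log[OF assms] by (simp add: log_growth_def)
qed

section \<open>Integration over \<open>P\<close>\<close>

lemma integrable_lebesgue_on_continuous:
  fixes f :: "real \<Rightarrow> 'b::euclidean_space"
  assumes "P \<in> sets lebesgue" "P \<subseteq> {a..b}" "continuous_on {a..b} f"
  shows "integrable (lebesgue_on P) f"
proof -
  have "f absolutely_integrable_on {a..b}"
    using assms(3) by (rule absolutely_integrable_continuous_real)
  then have "f absolutely_integrable_on P"
    using assms(1,2) by (rule set_integrable_subset)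
  then show ?thesis using assms(1) by (rule absolutely_integrable_imp_integrable)
qed

lemma integral_lebesgue_on_pos:
  fixes f :: "'a::euclidean_space \<Rightarrow> real"
  assumes P: "P \<in> lmeasurable" "emeasure lebesgue P > 0" and N: "N \<in> null_sets lebesgue"
    and f: "integrable (lebesgue_on P) f" "\<And>x. x \<in> P \<Longrightarrow> 0 \<le> f x"
      "\<And>x. x \<in> P - N \<Longrightarrow> 0 < f x"
  shows "0 < integral\<^sup>L (lebesgue_on P) f"
proof -
  interpret finite_measure "lebesgue_on P"
    using P(1) by (rule finite_measure_lebesgue_on)
  have sets: "P \<in> sets lebesgue" "P - N \<in> sets lebesgue"
    using P(1) N by auto
  have "emeasure (lebesgue_on P) (P - N) = emeasure lebesgue P"
    using sets N by (simp add: emeasure_restrict_space emeasure_Diff_null_set)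
  moreover have "AE x in lebesgue_on P. x \<in> P - N \<longrightarrow> 0 \<noteq> f x"
    using f(3) by (intro AE_I2) force
  moreover have "AE x in lebesgue_on P. 0 \<le> f x"
    using f(2) by (intro AE_I2) (simp add: space_restrict_space)
  ultimately have "integral\<^sup>L (lebesgue_on P) (\<lambda>_. 0) < integral\<^sup>L (lebesgue_on P) f"
    using P(2) sets f(1)
    by (intro integral_less_AE[where A = "P - N"]) (auto simp: sets_restrict_space_iff)
  then show ?thesis by simp
qed

lemma lmeasurable_subset_Icc: "P \<in> sets lebesgue \<Longrightarrow> P \<subseteq> {a..b::real} \<Longrightarrow> P \<in> lmeasurable"
  by (meson bounded_closed_interval bounded_set_imp_lmeasurable bounded_subset)

definition heads_weight :: "real set \<Rightarrow> nat \<Rightarrow> real list \<Rightarrow> real" where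
  "heads_weight P k Y = integral\<^sup>L (lebesgue_on P) (\<lambda>p. Pp k p Y * p)"

definition tails_weight :: "real set \<Rightarrow> nat \<Rightarrow> real list \<Rightarrow> real" where
  "tails_weight P k Y = integral\<^sup>L (lebesgue_on P) (\<lambda>p. Pp k p Y * (1 - p))"

lemma integrable_Pp_times:
  assumes "P \<in> sets lebesgue" "P \<subseteq> {0..1}" "continuous_on {0..1} g"
  shows "integrable (lebesgue_on P) (\<lambda>p. Pp k p Y * g p)"
  using assms unfolding Pp_def
  by (intro integrable_lebesgue_on_continuous continuous_intros) auto

lemma weights_pos:
  assumes "P \<in> sets lebesgue" "P \<subseteq> {0..1}" "emeasure lebesgue P > 0"
  shows "0 < heads_weight P k Y" and "0 < tails_weight P k Y"
proof -
  have P: "P \<in> lmeasurable" using assms(1,2) by (rule lmeasurable_subset_Icc)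
  have N: "{0, 1} \<in> null_sets lebesgue" by simp
  have "x \<in> P - {0, 1} \<Longrightarrow> 0 < x \<and> x < 1" for x using assms(2) by force
  then show "0 < heads_weight P k Y" "0 < tails_weight P k Y"
    unfolding heads_weight_def tails_weight_def using assms(2)
    by (intro integral_lebesgue_on_pos[OF P assms(3) N] integrable_Pp_times[OF assms(1,2)];
        force simp: Pp_def intro!: continuous_intros)+
qed

definition stage_payoff :: "real set \<Rightarrow> nat \<Rightarrow> real list \<Rightarrow> real \<Rightarrow> real" where
  "stage_payoff P k Y a = heads_weight P k Y * ln (1 + a) + tails_weight P k Y * ln (1 - a)"

definition total_payoff :: "nat \<Rightarrow> real set \<Rightarrow> (real list \<Rightarrow> nat \<Rightarrow> real) \<Rightarrow> real" where
  "total_payoff n P K =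
     (1 / real n) * (\<Sum>k<n. \<Sum>Y\<in>paths k. stage_payoff P k Y (K (pad_path n Y) k))"

lemma integral_log_growth:
  assumes P: "P \<in> sets lebesgue" "P \<subseteq> {0..1}" and K: "K \<in> admissible n"
  shows "integral\<^sup>L (lebesgue_on P) (log_growth n K) = total_payoff n P K"
proof -
  define f where "f k Y p = Pp k p Y * p * ln (1 + K (pad_path n Y) k)
      + Pp k p Y * (1 - p) * ln (1 - K (pad_path n Y) k)" for k Y p
  have int: "integrable (lebesgue_on P) (f k Y)" for k Y
    unfolding f_def Pp_def using P
    by (intro integrable_lebesgue_on_continuous continuous_intros) auto
  have "log_growth n K = (\<lambda>p. (1 / real n) * (\<Sum>k<n. \<Sum>Y\<in>paths k. f k Y p))"
    using log_growth_stagewise[OF K] by (auto simp: f_def algebra_simps)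
  moreover have "integral\<^sup>L (lebesgue_on P) (f k Y) = stage_payoff P k Y (K (pad_path n Y) k)" for k Y
    unfolding f_def stage_payoff_def heads_weight_def tails_weight_def
    using integrable_Pp_times[OF P] by (simp add: continuous_intros)
  ultimately show ?thesis
    using int by (simp add: total_payoff_def integrable_sum)
qed

lemma Kstar_eq_weights:
  assumes P: "P \<in> sets lebesgue" "P \<subseteq> {0..1}"
  shows "Kstar P X k =
    (heads_weight P k (take k X) - tails_weight P k (take k X)) /
    (heads_weight P k (take k X) + tails_weight P k (take k X))"
proof -
  define Y where "Y = take k X"
  have Pp: "Pp k p Y = p ^ nheads Y * (1 - p) ^ (k - nheads Y)" for p
    by (simp add: Pp_def)
  have LINT: "(LINT p:P|lebesgue. g p) = integral\<^sup>L (lebesgue_on P) g" for g :: "real \<Rightarrow> real"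
    unfolding set_lebesgue_integral_def using P(1)
    by (intro integral_restrict_space[symmetric]) simp
  have "(\<lambda>p. p ^ nheads Y * (1 - p) ^ (k - nheads Y) * (2 * p - 1)) =
      (\<lambda>p. Pp k p Y * p - Pp k p Y * (1 - p))"
   and "(\<lambda>p. p ^ nheads Y * (1 - p) ^ (k - nheads Y)) =
      (\<lambda>p. Pp k p Y * p + Pp k p Y * (1 - p))"
    by (auto simp: Pp algebra_simps)
  then show ?thesis
    using integrable_Pp_times[OF P]
    by (simp add: Kstar_def LINT heads_weight_def tails_weight_def Y_def continuous_intros)
qed

lemma Kstar_abs_less:
  assumes "P \<in> sets lebesgue" "P \<subseteq> {0..1}" "emeasure lebesgue P > 0"
  shows "\<bar>Kstar P X k\<bar> < 1"
  using weights_pos[OF assms, of k "take k X"]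
  by (simp add: Kstar_eq_weights[OF assms(1,2)] abs_less_iff field_simps)

lemma Kstar_admissible:
  assumes "P \<in> sets lebesgue" "P \<subseteq> {0..1}" "emeasure lebesgue P > 0"
  shows "Kstar P \<in> admissible n"
  using Kstar_abs_less[OF assms] by (auto simp: admissible_def Kstar_def less_imp_le)

lemma Kstar_solvent:
  assumes "P \<in> sets lebesgue" "P \<subseteq> {0..1}" "emeasure lebesgue P > 0"
  shows "solvent n (Kstar P)"
  unfolding solvent_def
proof (intro ballI allI impI)
  fix X k assume "X \<in> paths n" "k < n"
  then show "0 < 1 + Kstar P X k * X ! k"
    using Kstar_abs_less[OF assms, of X k] nth_path_cases by (force simp: abs_less_iff)
qed

section \<open>Stagewise optimality of \<open>Kstar\<close>\<close>

text \<open>The first-order bound \<open>ln x - ln y \<le> (x - y) / y\<close> at \<open>y = 1 \<plusminus> s\<close>: the linear terms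
  cancel because \<open>A / (1 + s) = B / (1 - s)\<close>.\<close>
lemma weighted_log_less:
  fixes A B a :: real
  assumes A: "0 < A" and B: "0 < B" and a: "\<bar>a\<bar> < 1" and ne: "a \<noteq> (A - B) / (A + B)"
  defines "s \<equiv> (A - B) / (A + B)"
  shows "A * ln (1 + a) + B * ln (1 - a) < A * ln (1 + s) + B * ln (1 - s)"
proof -
  have s: "1 + s = 2 * A / (A + B)" "1 - s = 2 * B / (A + B)"
    using A B by (simp_all add: s_def field_simps)
  then have s_pos: "0 < 1 + s" "0 < 1 - s" using A B by simp_all
  have "ln (1 + a) - ln (1 + s) < (a - s) / (1 + s)"
    using ln_diff_less[of "1 + a" "1 + s"] a s_pos ne by (simp add: s_def)
  moreover have "ln (1 - a) - ln (1 - s) \<le> (s - a) / (1 - s)"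
    using ln_diff_le[of "1 - a" "1 - s"] a s_pos by simp
  moreover have "A * ((a - s) / (1 + s)) + B * ((s - a) / (1 - s)) = 0"
    using A B by (simp add: s field_simps)
  ultimately have "A * (ln (1 + a) - ln (1 + s)) + B * (ln (1 - a) - ln (1 - s)) < 0"
    using mult_strict_left_mono[OF _ A] mult_left_mono[OF _ less_imp_le[OF B]] by fastforce
  then show ?thesis by (simp add: algebra_simps)
qed

lemma stage_payoff_less:
  assumes P: "P \<in> sets lebesgue" "P \<subseteq> {0..1}" "emeasure lebesgue P > 0"
    and K: "K \<in> admissible n" "solvent n K" and k: "k < n" and Y: "Y \<in> paths k"
    and ne: "K (pad_path n Y) k \<noteq> Kstar P (pad_path n Y) k"
  shows "stage_payoff P k Y (K (pad_path n Y) k) < stage_payoff P k Y (Kstar P (pad_path n Y) k)"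
proof -
  have "take k (pad_path n Y) = Y" using Y by (simp add: pad_path_def paths_def)
  then have "Kstar P (pad_path n Y) k =
      (heads_weight P k Y - tails_weight P k Y) / (heads_weight P k Y + tails_weight P k Y)"
    by (simp add: Kstar_eq_weights[OF P(1,2)])
  then show ?thesis
    using weighted_log_less[OF weights_pos[OF P] solvent_bet_abs_less[OF K k Y]] ne
    by (simp add: stage_payoff_def)
qed

lemma total_payoff_less:
  assumes P: "P \<in> sets lebesgue" "P \<subseteq> {0..1}" "emeasure lebesgue P > 0"
    and K: "K \<in> admissible n" "solvent n K"
    and X: "X \<in> paths n" and k: "k < n" and ne: "K X k \<noteq> Kstar P X k"
  shows "total_payoff n P K < total_payoff n P (Kstar P)"
proof -
  let ?S = "\<lambda>L j Z. stage_payoff P j Z (L (pad_path n Z) j)"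
  have le: "?S K j Z \<le> ?S (Kstar P) j Z" if "j < n" "Z \<in> paths j" for j Z
    using stage_payoff_less[OF P K that] by (cases "K (pad_path n Z) j = Kstar P (pad_path n Z) j") auto
  define Y where "Y = take k X"
  have Y: "Y \<in> paths k" using X k by (simp add: Y_def take_in_paths)
  have "Kstar P X k = Kstar P (pad_path n Y) k"
    using X k by (simp add: Kstar_def Y_def pad_path_def paths_def)
  then have "K (pad_path n Y) k \<noteq> Kstar P (pad_path n Y) k"
    using ne admissible_causal[OF K(1) X k] by (simp add: Y_def)
  then have "(\<Sum>Z\<in>paths k. ?S K k Z) < (\<Sum>Z\<in>paths k. ?S (Kstar P) k Z)"
    using le k Y stage_payoff_less[OF P K k Y] by (intro sum_strict_mono_ex1 finite_paths) auto
  then have "(\<Sum>j<n. \<Sum>Z\<in>paths j. ?S K j Z) < (\<Sum>j<n. \<Sum>Z\<in>paths j. ?S (Kstar P) j Z)"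
    using le k by (intro sum_strict_mono_ex1) (auto intro!: sum_mono)
  then show ?thesis using k by (simp add: total_payoff_def divide_strict_right_mono)
qed

section \<open>The extended-real objective\<close>

lemma ELG_solvent:
  assumes "solvent n K"
  shows "ELG n K p = ereal (log_growth n K p)"
proof -
  have "(\<Sum>k<n. elog (1 + K X k * X ! k)) = ereal (\<Sum>k<n. ln (1 + K X k * X ! k))"
    if X: "X \<in> paths n" for X
  proof -
    have "0 < 1 + K X k * X ! k" if "k < n" for k
      using assms X that unfolding solvent_def by blast
    then have "(\<Sum>k<n. elog (1 + K X k * X ! k)) = (\<Sum>k<n. ereal (ln (1 + K X k * X ! k)))"
      by (intro sum.cong) (auto simp: elog_def not_le)
    then show ?thesis by simp
  qed
  then have "(\<Sum>X\<in>paths n. ereal (Pp n p X) * (\<Sum>k<n. elog (1 + K X k * X ! k))) =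
      (\<Sum>X\<in>paths n. ereal (Pp n p X * (\<Sum>k<n. ln (1 + K X k * X ! k))))"
    by (intro sum.cong) simp_all
  then show ?thesis by (simp add: ELG_def log_growth_def)
qed

lemma ereal_set_integral_real:
  fixes g :: "real \<Rightarrow> real"
  assumes P: "P \<in> sets lebesgue" and g: "integrable (lebesgue_on P) g"
  shows "ereal_set_integral P (\<lambda>p. ereal (g p)) = ereal (integral\<^sup>L (lebesgue_on P) g)"
proof -
  have "(\<integral>\<^sup>+ p. ennreal (norm (g p)) \<partial>lebesgue_on P) < \<infinity>"
    using g by (simp add: integrable_iff_bounded)
  then have fin: "(\<integral>\<^sup>+ p. ennreal (g p) \<partial>lebesgue_on P) < \<infinity>"
      "(\<integral>\<^sup>+ p. ennreal (- g p) \<partial>lebesgue_on P) < \<infinity>"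
    by (auto elim!: le_less_trans[rotated] intro!: nn_integral_mono)
  have "enn2ereal x = ereal (enn2real x)" if "x < \<infinity>" for x
    using that by (metis ennreal_enn2real enn2ereal_ennreal enn2real_nonneg infinity_ennreal_def)
  with fin show ?thesis
    using P by (simp add: ereal_set_integral_def nn_integral_restrict_space[symmetric]
        real_lebesgue_integral_def[OF g])
qed

lemma fobj_solvent:
  assumes P: "P \<in> sets lebesgue" "P \<subseteq> {0..1}" and K: "K \<in> admissible n" "solvent n K"
  shows "fobj n P K = ereal (total_payoff n P K)"
proof -
  have "integrable (lebesgue_on P) (log_growth n K)"
    unfolding log_growth_def Pp_def using P
    by (intro integrable_lebesgue_on_continuous continuous_intros) auto
  moreover have "ELG n K = (\<lambda>p. ereal (log_growth n K p))"
    using ELG_solvent[OF K(2)] by auto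
  ultimately show ?thesis
    by (simp add: fobj_def ereal_set_integral_real[OF P(1)] integral_log_growth[OF P K(1)])
qed

lemma sum_ereal_eq_MInfty:
  fixes f :: "'a \<Rightarrow> ereal"
  assumes "finite A" "a \<in> A" "f a = -\<infinity>" "\<And>x. x \<in> A \<Longrightarrow> f x \<noteq> \<infinity>"
  shows "sum f A = -\<infinity>"
proof -
  have "sum f A = f a + sum f (A - {a})" using assms(1,2) by (simp add: sum.remove)
  moreover have "sum f (A - {a}) \<noteq> \<infinity>" using assms by (auto simp: sum_Pinfty)
  ultimately show ?thesis using assms(3) by simp
qed

lemma ELG_bounded_above:
  assumes K: "K \<in> admissible n"
  shows "\<exists>C. \<forall>p\<in>{0..1}. ELG n K p \<le> ereal C"
proof -
  have path_term_le: "ereal (Pp n p X) * (\<Sum>k<n. elog (1 + K X k * X ! k)) \<le> ereal (n * ln 2)"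
    if p: "p \<in> {0..1}" and X: "X \<in> paths n" for p X
  proof -
    have "elog (1 + K X k * X ! k) \<le> ereal (ln 2)" if k: "k < n" for k
    proof -
      have "\<bar>K X k\<bar> \<le> 1" using K X k unfolding admissible_def by blast
      then have "1 + K X k * X ! k \<le> 2" using nth_path_cases[OF X k] by (auto simp: abs_le_iff)
      then show ?thesis by (simp add: elog_def)
    qed
    then have "(\<Sum>k<n. elog (1 + K X k * X ! k)) \<le> (\<Sum>k<n. ereal (ln 2))"
      by (intro sum_mono) simp
    then have S: "(\<Sum>k<n. elog (1 + K X k * X ! k)) \<le> ereal (n * ln 2)" by simp
    have Pp: "0 \<le> Pp n p X" "Pp n p X \<le> 1"
      using p by (simp_all add: Pp_def mult_le_one power_le_one)
    have "ereal (Pp n p X) * (\<Sum>k<n. elog (1 + K X k * X ! k)) \<le> ereal (Pp n p X) * ereal (n * ln 2)"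
      using S Pp(1) by (intro ereal_mult_left_mono) simp_all
    also have "\<dots> = ereal (Pp n p X * (n * ln 2))" by simp
    also have "\<dots> \<le> ereal (n * ln 2)"
      using Pp by (simp add: mult_left_le_one_le)
    finally show ?thesis .
  qed
  have "ELG n K p \<le> ereal (1 / n * (card (paths n) * (n * ln 2)))" if "p \<in> {0..1}" for p
  proof -
    have "(\<Sum>X\<in>paths n. ereal (Pp n p X) * (\<Sum>k<n. elog (1 + K X k * X ! k))) \<le>
        (\<Sum>X\<in>paths n. ereal (n * ln 2))"
      using path_term_le[OF that] by (rule sum_mono)
    also have "\<dots> = ereal (card (paths n) * (n * ln 2))" by simp
    finally have "ELG n K p \<le> ereal (1 / n) * ereal (card (paths n) * (n * ln 2))"
      unfolding ELG_def by (rule ereal_mult_left_mono) simp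
    then show ?thesis by simp
  qed
  then show ?thesis by blast
qed

lemma ELG_insolvent:
  assumes "\<not> solvent n K" and p: "0 < p" "p < 1"
  shows "ELG n K p = -\<infinity>"
proof -
  obtain X k where X: "X \<in> paths n" and k: "k < n" and ruin: "1 + K X k * X ! k \<le> 0"
    using assms(1) by (auto simp: solvent_def not_less)
  have Pp_pos: "0 < Pp n p Z" for Z using p by (simp add: Pp_def)
  have no_PInf: "ereal (Pp n p Z) * (\<Sum>k<n. elog (1 + K Z k * Z ! k)) \<noteq> \<infinity>" for Z
    using Pp_pos[of Z] by (simp add: sum_Pinfty elog_def)
  have "(\<Sum>k<n. elog (1 + K X k * X ! k)) = -\<infinity>"
    using ruin k by (intro sum_ereal_eq_MInfty[where a = k]) (auto simp: elog_def)
  then have "ereal (Pp n p X) * (\<Sum>k<n. elog (1 + K X k * X ! k)) = -\<infinity>"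
    using Pp_pos[of X] by simp
  then have "(\<Sum>Z\<in>paths n. ereal (Pp n p Z) * (\<Sum>k<n. elog (1 + K Z k * Z ! k))) = -\<infinity>"
    using X no_PInf by (intro sum_ereal_eq_MInfty[where a = X] finite_paths)
  then show ?thesis using k by (simp add: ELG_def)
qed

text \<open>Needed because \<open>\<infinity> - \<infinity> = \<infinity>\<close> in \<open>ereal\<close>.\<close>
lemma ELG_positive_part_finite:
  assumes P: "P \<in> sets lebesgue" "P \<subseteq> {0..1}" and K: "K \<in> admissible n"
  shows "(\<integral>\<^sup>+ p\<in>P. e2ennreal (ELG n K p) \<partial>lebesgue) < \<infinity>"
proof -
  obtain C where C: "\<forall>p\<in>{0..1}. ELG n K p \<le> ereal C"
    using ELG_bounded_above[OF K] by blast
  have "(\<integral>\<^sup>+ p\<in>P. e2ennreal (ELG n K p) \<partial>lebesgue) \<le> (\<integral>\<^sup>+ p. ennreal C * indicator P p \<partial>lebesgue)"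
    using C P(2) by (intro nn_integral_mono) (auto split: split_indicator dest!: e2ennreal_mono)
  also have "\<dots> = ennreal C * emeasure lebesgue P"
    using P(1) by (simp add: nn_integral_cmult_indicator)
  also have "\<dots> < \<infinity>"
  proof -
    have "emeasure lebesgue P < \<infinity>"
      using lmeasurable_subset_Icc[OF P] unfolding fmeasurable_def by blast
    then show ?thesis by (simp add: ennreal_mult_less_top)
  qed
  finally show ?thesis .
qed

lemma fobj_insolvent:
  assumes P: "P \<in> sets lebesgue" "P \<subseteq> {0..1}" "emeasure lebesgue P > 0"
    and K: "K \<in> admissible n" "\<not> solvent n K"
  shows "fobj n P K = -\<infinity>"
proof -
  have "(\<integral>\<^sup>+ p. \<infinity> * indicator (P - {0, 1}) p \<partial>lebesgue) \<le>
      (\<integral>\<^sup>+ p\<in>P. e2ennreal (- ELG n K p) \<partial>lebesgue)"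
    using P(2) ELG_insolvent[OF K(2)] by (intro nn_integral_mono) (force split: split_indicator)
  moreover have "(\<integral>\<^sup>+ p. \<infinity> * indicator (P - {0, 1}) p \<partial>lebesgue) =
      \<infinity> * emeasure lebesgue (P - {0, 1})"
    using P(1) by (intro nn_integral_cmult_indicator) auto
  moreover have "emeasure lebesgue (P - {0, 1}) = emeasure lebesgue P"
    using P(1) by (intro emeasure_Diff_null_set) auto
  moreover have "\<infinity> * emeasure lebesgue P = \<infinity>"
    using P(3) by (simp add: ennreal_top_mult)
  ultimately have neg: "(\<integral>\<^sup>+ p\<in>P. e2ennreal (- ELG n K p) \<partial>lebesgue) = \<infinity>"
    by (simp add: top_unique)
  have "enn2ereal (\<integral>\<^sup>+ p\<in>P. e2ennreal (ELG n K p) \<partial>lebesgue) \<noteq> \<infinity>"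
    using ELG_positive_part_finite[OF P(1,2) K(1)] by simp
  then show ?thesis
    by (cases "enn2ereal (\<integral>\<^sup>+ p\<in>P. e2ennreal (ELG n K p) \<partial>lebesgue)")
      (simp_all add: fobj_def ereal_set_integral_def neg)
qed

lemma fobj_cong:
  assumes "\<forall>X\<in>paths n. \<forall>k<n. K X k = K' X k"
  shows "fobj n P K = fobj n P K'"
proof -
  have "ELG n K = ELG n K'"
    unfolding ELG_def using assms by (intro ext arg_cong2[where f = times] refl sum.cong) auto
  then show ?thesis by (simp add: fobj_def)
qed

lemma fobj_less_Kstar:
  assumes P: "P \<in> sets lebesgue" "P \<subseteq> {0..1}" "emeasure lebesgue P > 0"
    and K: "K \<in> admissible n" and X: "X \<in> paths n" and k: "k < n"
    and ne: "K X k \<noteq> Kstar P X k"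
  shows "fobj n P K < fobj n P (Kstar P)"
proof -
  have opt: "fobj n P (Kstar P) = ereal (total_payoff n P (Kstar P))"
    using P by (intro fobj_solvent Kstar_admissible Kstar_solvent)
  show ?thesis
  proof (cases "solvent n K")
    case True
    then show ?thesis
      using total_payoff_less[OF P K True X k ne] by (simp add: opt fobj_solvent[OF P(1,2) K])
  next
    case False
    then show ?thesis by (simp add: opt fobj_insolvent[OF P K])
  qed
qed

theorem mainTheorem2:
  fixes n :: nat and P :: "real set"
  assumes "n \<ge> 1"
    and "P \<in> sets lebesgue"
    and "P \<subseteq> {0..1}"
    and "emeasure lebesgue P > 0"
  shows "Kstar P \<in> admissible n
    \<and> (\<forall>K\<in>admissible n. fobj n P K \<le> fobj n P (Kstar P))
    \<and> (\<forall>K\<in>admissible n. (\<forall>K'\<in>admissible n. fobj n P K' \<le> fobj n P K)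
          \<longrightarrow> (\<forall>X\<in>paths n. \<forall>k<n. K X k = Kstar P X k))"
proof -
  note P = assms(2-4)
  have optimal: "fobj n P K \<le> fobj n P (Kstar P)" if K: "K \<in> admissible n" for K
  proof (cases "\<forall>X\<in>paths n. \<forall>k<n. K X k = Kstar P X k")
    case True
    then show ?thesis using fobj_cong[OF True] by simp
  next
    case False
    then show ?thesis using fobj_less_Kstar[OF P K] by (meson less_imp_le)
  qed
  have unique: "\<forall>X\<in>paths n. \<forall>k<n. K X k = Kstar P X k"
    if "K \<in> admissible n" and "\<forall>K'\<in>admissible n. fobj n P K' \<le> fobj n P K" for K
    using fobj_less_Kstar[OF P that(1)] that(2) Kstar_admissible[OF P] by (meson not_le)
  show ?thesis using Kstar_admissible[OF P] optimal unique by blast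
qed

end
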